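(* Let $G$ be a graph on vertex set $\{1,\dots,n\}$ and consider the reliability extension of $\Gamma_{NC_1}$ on $G$ under the fractional attack model on player $x=1$, with baseline reliabilities $p^*_j\in(0,1]$ ($j\ne1$), a fixed reliability $p_1\in[0,1]$ of player $1$, common cost slopes $L,R>0$ and budget $B\ge0$. (i) If $G=K_n$ (complete graph), or $G=S_n$ is the star with center $1$, then the following profile is an optimal attack: order the nodes $2,\dots,n$ as $\sigma(2),\dots,\sigma(n)$ with $p^*_{\sigma(2)}\ge p^*_{\sigma(3)}\ge\dots\ge p^*_{\sigma(n)}$ (ties broken arbitrarily); for $i=2,3,\dots$ in turn, raise $p_{\sigma(i)}$ to $1$ while the remaining budget allows it, and when the remaining budget no longer allows raising $p_{\sigma(i)}$ to $1$, raise it as much as the remaining budget allows; leave all other reliabilities at their baseline values. (ii) If $G=S_n$ is the star with center $2$ (so $1$ is a leaf), then the profile obtained by the same procedure, but using the order $Q$ consisting of node $2$ first, followed by nodes $3,\dots,n$ in decreasing order of baseline reliability (ties broken arbitrarily), is an optimal attack.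
   Context: Game $\Gamma_{NC_1}$ on $G=(V,E)$: $v_{NC_1}(S)=|S\cup\delta(S)|$, where $\delta(S)$ is the set of vertices outside $S$ having a neighbour in $S$. For $T\subseteq S$, $\Pi_{T,S}=\prod_{i\in T}p_i\prod_{i\in S\setminus T}(1-p_i)$; the reliability extension with parameters $p=(p_1,\dots,p_n)$ is $\overline v(S)=\sum_{T\subseteq S}v(T)\Pi_{T,S}$. Shapley value: $Sh[v](x)=\frac1{n!}\sum_\pi[v(S^x_\pi\cup\{x\})-v(S^x_\pi)]$ over permutations $\pi$, $S^x_\pi$ the players preceding $x$. Fractional attack model on target $x$: $p_x$ is fixed; for every $j\ne x$ one may choose any $p_j\in[0,1]$ at cost $u_j(p_j)$, where $u_j(p)=L(p^*_j-p)$ if $p<p^*_j$ and $u_j(p)=R(p-p^*_j)$ if $p\ge p^*_j$. A profile is feasible if $\sum_{j\ne x}u_j(p_j)\le B$; an optimal attack is a feasible profile minimizing $Sh[\overline{v_{NC_1}}](x)$. *)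

theory Defs
  imports Complex_Main "HOL-Combinatorics.Multiset_Permutations"
begin

text \<open>Graphs on vertex set V (here V = {1..n}) given by a symmetric irreflexive
  edge predicate E.\<close>

definition complete_graph :: "nat \<Rightarrow> nat \<Rightarrow> bool" where
  "complete_graph i j \<longleftrightarrow> i \<noteq> j"

definition star_graph :: "nat \<Rightarrow> nat \<Rightarrow> nat \<Rightarrow> bool" where
  "star_graph c i j \<longleftrightarrow> i \<noteq> j \<and> (i = c \<or> j = c)"

definition nbhd_out :: "(nat \<Rightarrow> nat \<Rightarrow> bool) \<Rightarrow> nat set \<Rightarrow> nat set \<Rightarrow> nat set" where
  "nbhd_out E V S = {j \<in> V - S. \<exists>i\<in>S. E i j}"

definition v_NC1 :: "(nat \<Rightarrow> nat \<Rightarrow> bool) \<Rightarrow> nat set \<Rightarrow> nat set \<Rightarrow> real" where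
  "v_NC1 E V S = real (card (S \<union> nbhd_out E V S))"

definition Pi_TS :: "(nat \<Rightarrow> real) \<Rightarrow> nat set \<Rightarrow> nat set \<Rightarrow> real" where
  "Pi_TS p T S = (\<Prod>i\<in>T. p i) * (\<Prod>i\<in>S - T. 1 - p i)"

definition rel_ext :: "(nat set \<Rightarrow> real) \<Rightarrow> (nat \<Rightarrow> real) \<Rightarrow> nat set \<Rightarrow> real" where
  "rel_ext v p S = (\<Sum>T\<in>Pow S. v T * Pi_TS p T S)"

text \<open>Shapley value of player x in game v with player set V; permutations are
  represented as distinct lists enumerating V, and the players preceding x are
  those before x in the list.\<close>
definition shapley :: "nat set \<Rightarrow> (nat set \<Rightarrow> real) \<Rightarrow> nat \<Rightarrow> real" where
  "shapley V v x = (\<Sum>\<pi>\<in>permutations_of_set V.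
      v (set (takeWhile (\<lambda>y. y \<noteq> x) \<pi>) \<union> {x}) - v (set (takeWhile (\<lambda>y. y \<noteq> x) \<pi>)))
      / fact (card V)"

definition cost :: "real \<Rightarrow> real \<Rightarrow> real \<Rightarrow> real \<Rightarrow> real" where
  "cost L R ps p = (if p < ps then L * (ps - p) else R * (p - ps))"

definition feasible :: "nat set \<Rightarrow> nat \<Rightarrow> real \<Rightarrow> (nat \<Rightarrow> real) \<Rightarrow> real \<Rightarrow> real \<Rightarrow> real
    \<Rightarrow> (nat \<Rightarrow> real) \<Rightarrow> bool" where
  "feasible V x px pstar L R B p \<longleftrightarrow>
     p x = px \<and> (\<forall>j\<in>V - {x}. 0 \<le> p j \<and> p j \<le> 1) \<and>
     (\<Sum>j\<in>V - {x}. cost L R (pstar j) (p j)) \<le> B"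

definition optimal_attack :: "(nat \<Rightarrow> nat \<Rightarrow> bool) \<Rightarrow> nat set \<Rightarrow> nat \<Rightarrow> real \<Rightarrow> (nat \<Rightarrow> real)
    \<Rightarrow> real \<Rightarrow> real \<Rightarrow> real \<Rightarrow> (nat \<Rightarrow> real) \<Rightarrow> bool" where
  "optimal_attack E V x px pstar L R B p \<longleftrightarrow>
     feasible V x px pstar L R B p \<and>
     (\<forall>q. feasible V x px pstar L R B q \<longrightarrow>
        shapley V (rel_ext (v_NC1 E V) p) x \<le> shapley V (rel_ext (v_NC1 E V) q) x)"

fun greedy :: "real \<Rightarrow> (nat \<Rightarrow> real) \<Rightarrow> nat list \<Rightarrow> real \<Rightarrow> (nat \<Rightarrow> real) \<Rightarrow> nat \<Rightarrow> real" where
  "greedy R pstar [] b p = p"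
| "greedy R pstar (j # js) b p =
     (if R * (1 - pstar j) \<le> b
      then greedy R pstar js (b - R * (1 - pstar j)) (p(j := 1))
      else p(j := pstar j + b / R))"

definition greedy_profile :: "nat \<Rightarrow> real \<Rightarrow> (nat \<Rightarrow> real) \<Rightarrow> real \<Rightarrow> real \<Rightarrow> nat list
    \<Rightarrow> nat \<Rightarrow> real" where
  "greedy_profile x px pstar R B ord = greedy R pstar ord B (pstar(x := px))"

end

theory Submission
  imports Defs "HOL-Analysis.Analysis"
begin

text \<open>
  Let player \<open>x\<close> arrive at a uniform time \<open>t \<in> [0,1]\<close>; then every other player precedes
  \<open>x\<close> independently with probability \<open>t\<close>, so the average over all orders of a product
  \<open>\<Prod>r i\<close> over the predecessors of \<open>x\<close> is \<open>\<integral>\<^sub>0\<^sup>1 \<Prod>(1 - t + t * r i) dt\<close>. As the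
  reliability extension of \<open>v_NC1\<close> is the expected number of vertices covered by the working
  players, this gives \<open>Sh(x) = p x * \<integral>\<^sub>0\<^sup>1 (\<Sum>j\<in>N[x]. \<Prod>i\<in>N[j]-{x}. 1 - t * p i) dt\<close>,
  and it suffices that the greedy profile minimises the integrand for every \<open>t\<close>.

  Lowering a reliability never helps the attacker, so only raises above the baseline with total
  at most \<open>B / R\<close> matter. For \<open>K\<^sub>n\<close> and the star centred at \<open>x\<close> the integrand is increasing
  in \<open>\<Prod>(1 - t * p i)\<close> and \<open>\<Sum>(1 - t * p i)\<close>. The greedy profile spends the whole budget,
  which handles the sum, and it minimises the product by an exchange argument: the product is
  smallest when the raise is concentrated on few factors, and the node of largest baseline is
  the cheapest to raise to \<open>1\<close>. For the star centred at \<open>c \<noteq> x\<close> the integrand is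
  \<open>(1 - t * p c) * (1 + \<Prod>i\<in>V-{x,c}. 1 - t * p i)\<close>, and a unit of raise spent on \<open>c\<close>
  gains at least as much as it could gain anywhere else.
\<close>

section \<open>The Shapley value as an integral\<close>

definition prod_integral :: "(nat \<Rightarrow> real) \<Rightarrow> nat set \<Rightarrow> real" where
  "prod_integral r W = integral {0..1} (\<lambda>t. \<Prod>i\<in>W. 1 - t + t * r i)"

lemma has_integral_prod_integral:
  "((\<lambda>t. \<Prod>i\<in>W. 1 - t + t * r i) has_integral prod_integral r W) {0..1}"
  unfolding prod_integral_def
  by (intro integrable_integral integrable_continuous_interval continuous_intros)

lemma has_real_derivative_prod_integrand:
  fixes r :: "nat \<Rightarrow> real"
  assumes "finite W"
  shows "((\<lambda>t. (t - 1) * (\<Prod>i\<in>W. 1 - t + t * r i)) has_real_derivative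
      (real (card W) + 1) * (\<Prod>i\<in>W. 1 - t + t * r i)
        - (\<Sum>x\<in>W. r x * (\<Prod>i\<in>W - {x}. 1 - t + t * r i))) (at t)"
proof -
  define P where "P = (\<lambda>A. \<Prod>i\<in>A. 1 - t + t * r i)"
  have "((\<lambda>t. \<Prod>i\<in>W. 1 - t + t * r i) has_real_derivative
      (\<Sum>x\<in>W. (r x - 1) * P (W - {x}))) (at t)"
    unfolding P_def by (rule has_field_derivative_prod) (auto intro!: derivative_eq_intros)
  then have deriv: "((\<lambda>t. (t - 1) * (\<Prod>i\<in>W. 1 - t + t * r i)) has_real_derivative
      P W + (t - 1) * (\<Sum>x\<in>W. (r x - 1) * P (W - {x}))) (at t)"
    by (auto intro!: derivative_eq_intros simp: P_def)
  have "(t - 1) * (\<Sum>x\<in>W. (r x - 1) * P (W - {x})) = (\<Sum>x\<in>W. P W - r x * P (W - {x}))"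
    unfolding sum_distrib_left
    by (rule sum.cong) (use assms in \<open>auto simp: P_def prod.remove algebra_simps\<close>)
  then have "P W + (t - 1) * (\<Sum>x\<in>W. (r x - 1) * P (W - {x}))
      = (real (card W) + 1) * P W - (\<Sum>x\<in>W. r x * P (W - {x}))"
    by (simp add: sum_subtractf algebra_simps)
  with deriv show ?thesis
    by (simp only: P_def)
qed

lemma prod_integral_recurrence:
  assumes "finite W"
  shows "(real (card W) + 1) * prod_integral r W = 1 + (\<Sum>x\<in>W. r x * prod_integral r (W - {x}))"
proof -
  let ?F = "\<lambda>t. (t - 1) * (\<Prod>i\<in>W. 1 - t + t * r i)"
  let ?G = "\<lambda>t. (real (card W) + 1) * (\<Prod>i\<in>W. 1 - t + t * r i)
      - (\<Sum>x\<in>W. r x * (\<Prod>i\<in>W - {x}. 1 - t + t * r i))"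
  have "(?G has_integral (?F 1 - ?F 0)) {0..1}"
    using has_real_derivative_prod_integrand[OF assms]
    by (intro fundamental_theorem_of_calculus)
       (auto simp: has_real_derivative_iff_has_vector_derivative
          intro: has_vector_derivative_at_within)
  moreover have "(?G has_integral
      (real (card W) + 1) * prod_integral r W - (\<Sum>x\<in>W. r x * prod_integral r (W - {x}))) {0..1}"
    by (intro has_integral_diff has_integral_mult_right has_integral_sum assms
        has_integral_prod_integral)
  ultimately show ?thesis
    by (auto dest: has_integral_unique)
qed

lemma sum_permutations_of_set_Cons:
  assumes "finite V" "V \<noteq> {}"
  shows "(\<Sum>\<pi>\<in>permutations_of_set V. f \<pi>) = (\<Sum>x\<in>V. \<Sum>\<pi>\<in>permutations_of_set (V - {x}). f (x # \<pi>))"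
proof -
  have "(\<Sum>\<pi>\<in>permutations_of_set V. f \<pi>)
      = (\<Sum>x\<in>V. \<Sum>\<pi>\<in>(\<lambda>xs. x # xs) ` permutations_of_set (V - {x}). f \<pi>)"
    unfolding permutations_of_set_nonempty[OF assms(2)]
    by (rule sum.UNION_disjoint) (use assms(1) in auto)
  also have "\<dots> = (\<Sum>x\<in>V. \<Sum>\<pi>\<in>permutations_of_set (V - {x}). f (x # \<pi>))"
    by (subst sum.reindex) (auto simp: inj_on_def)
  finally show ?thesis .
qed

lemma sum_permutations_prod_takeWhile:
  assumes "finite V" "x \<in> V"
  shows "(\<Sum>\<pi>\<in>permutations_of_set V. \<Prod>i\<in>set (takeWhile (\<lambda>y. y \<noteq> x) \<pi>). r i)
     = fact (card V) * prod_integral r (V - {x})"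
  using assms
proof (induction "card V" arbitrary: V)
  case 0
  then show ?case by auto
next
  case (Suc k)
  define f where "f = (\<lambda>\<pi>. \<Prod>i\<in>set (takeWhile (\<lambda>y. y \<noteq> x) \<pi>). r i)"
  have card_rest: "card (V - {x}) = k"
    using Suc by simp
  have head: "(\<Sum>\<pi>\<in>permutations_of_set (V - {y}). f (y # \<pi>))
      = r y * (fact k * prod_integral r (V - {x} - {y}))"
    if y: "y \<in> V - {x}" for y
  proof -
    have "f (y # \<pi>) = r y * f \<pi>" if "\<pi> \<in> permutations_of_set (V - {y})" for \<pi>
    proof -
      have "y \<notin> set (takeWhile (\<lambda>y. y \<noteq> x) \<pi>)"
        using that by (auto dest: permutations_of_setD set_takeWhileD)
      then show ?thesis
        using y by (simp add: f_def)
    qed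
    then have "(\<Sum>\<pi>\<in>permutations_of_set (V - {y}). f (y # \<pi>))
        = r y * (\<Sum>\<pi>\<in>permutations_of_set (V - {y}). f \<pi>)"
      by (simp add: sum_distrib_left)
    also have "(\<Sum>\<pi>\<in>permutations_of_set (V - {y}). f \<pi>) = fact k * prod_integral r (V - {y} - {x})"
      unfolding f_def using Suc.hyps(1)[of "V - {y}"] Suc.hyps(2)[symmetric] Suc.prems y by simp
    finally show ?thesis
      by (metis Diff_insert2 insert_commute)
  qed
  have "(\<Sum>\<pi>\<in>permutations_of_set V. f \<pi>)
      = (\<Sum>\<pi>\<in>permutations_of_set (V - {x}). f (x # \<pi>))
        + (\<Sum>y\<in>V - {x}. \<Sum>\<pi>\<in>permutations_of_set (V - {y}). f (y # \<pi>))"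
    using Suc.prems by (subst sum_permutations_of_set_Cons) (auto simp: sum.remove)
  also have "(\<Sum>\<pi>\<in>permutations_of_set (V - {x}). f (x # \<pi>)) = fact k"
    using Suc.prems card_rest by (simp add: f_def)
  also have "(\<Sum>y\<in>V - {x}. \<Sum>\<pi>\<in>permutations_of_set (V - {y}). f (y # \<pi>))
      = (\<Sum>y\<in>V - {x}. r y * (fact k * prod_integral r (V - {x} - {y})))"
    by (rule sum.cong[OF refl head])
  also have "fact k + \<dots> = fact k * (1 + (\<Sum>y\<in>V - {x}. r y * prod_integral r (V - {x} - {y})))"
    by (simp add: sum_distrib_left algebra_simps)
  also have "\<dots> = fact k * ((real k + 1) * prod_integral r (V - {x}))"
    using prod_integral_recurrence[of "V - {x}" r] Suc.prems card_rest by simp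
  also have "\<dots> = fact (card V) * prod_integral r (V - {x})"
    using Suc.hyps(2)[symmetric] by (simp add: algebra_simps)
  finally show ?case
    unfolding f_def .
qed

lemma v_NC1_eq_sum:
  assumes "finite V" "T \<subseteq> V"
  shows "v_NC1 E V T = (\<Sum>j\<in>V. if \<exists>i\<in>T. i = j \<or> E i j then 1 else 0)"
proof -
  have "T \<union> nbhd_out E V T = {j\<in>V. \<exists>i\<in>T. i = j \<or> E i j}"
    using assms(2) unfolding nbhd_out_def by auto
  then show ?thesis
    unfolding v_NC1_def using assms(1) by (simp add: sum.inter_filter[symmetric])
qed

lemma sum_Pi_TS: "finite S \<Longrightarrow> (\<Sum>T\<in>Pow S. Pi_TS p T S) = 1"
  using prod_add[of S p "\<lambda>i. 1 - p i"] by (simp add: Pi_TS_def)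

lemma sum_Pi_TS_none:
  assumes "finite S"
  shows "(\<Sum>T\<in>Pow S. (if \<exists>i\<in>T. c i then 0 else 1) * Pi_TS p T S)
    = (\<Prod>i\<in>S. if c i then 1 - p i else 1)"
proof -
  have "(if \<exists>i\<in>T. c i then 0 else 1) * Pi_TS p T S
      = (\<Prod>i\<in>T. if c i then 0 else p i) * (\<Prod>i\<in>S - T. 1 - p i)" if "T \<subseteq> S" for T
    using finite_subset[OF that assms] by (auto simp: Pi_TS_def intro: prod.cong)
  then have "(\<Sum>T\<in>Pow S. (if \<exists>i\<in>T. c i then 0 else 1) * Pi_TS p T S)
      = (\<Prod>i\<in>S. (if c i then 0 else p i) + (1 - p i))"
    using prod_add[OF assms, of "\<lambda>i. if c i then 0 else p i" "\<lambda>i. 1 - p i"] by simp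
  also have "\<dots> = (\<Prod>i\<in>S. if c i then 1 - p i else 1)"
    by (rule prod.cong) auto
  finally show ?thesis .
qed

lemma rel_ext_v_NC1:
  assumes "finite V" "S \<subseteq> V"
  shows "rel_ext (v_NC1 E V) p S = (\<Sum>j\<in>V. 1 - (\<Prod>i\<in>S. if i = j \<or> E i j then 1 - p i else 1))"
proof -
  have fin: "finite S"
    using assms finite_subset by blast
  have "rel_ext (v_NC1 E V) p S
      = (\<Sum>j\<in>V. \<Sum>T\<in>Pow S. (if \<exists>i\<in>T. i = j \<or> E i j then 1 else 0) * Pi_TS p T S)"
    unfolding rel_ext_def using assms
    by (auto simp: v_NC1_eq_sum sum_distrib_right intro!: sum.cong sum.swap)
  also have "\<dots> = (\<Sum>j\<in>V. \<Sum>T\<in>Pow S.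
      Pi_TS p T S - (if \<exists>i\<in>T. i = j \<or> E i j then 0 else 1) * Pi_TS p T S)"
    by (intro sum.cong) auto
  also have "\<dots> = (\<Sum>j\<in>V. 1 - (\<Prod>i\<in>S. if i = j \<or> E i j then 1 - p i else 1))"
    using fin by (simp add: sum_subtractf sum_Pi_TS sum_Pi_TS_none)
  finally show ?thesis .
qed

definition shapley_density ::
    "(nat \<Rightarrow> nat \<Rightarrow> bool) \<Rightarrow> nat set \<Rightarrow> nat \<Rightarrow> (nat \<Rightarrow> real) \<Rightarrow> real \<Rightarrow> real" where
  "shapley_density E V x p t =
     (\<Sum>j\<in>{j\<in>V. x = j \<or> E x j}. \<Prod>i\<in>V - {x}. if i = j \<or> E i j then 1 - t * p i else 1)"

lemma rel_ext_v_NC1_insert: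
  assumes "finite V" "S \<subseteq> V" "x \<in> V" "x \<notin> S"
  shows "rel_ext (v_NC1 E V) p (insert x S) - rel_ext (v_NC1 E V) p S
    = p x * (\<Sum>j\<in>{j\<in>V. x = j \<or> E x j}. \<Prod>i\<in>S. if i = j \<or> E i j then 1 - p i else 1)"
proof -
  define Q where "Q = (\<lambda>j i. if i = j \<or> E i j then 1 - p i else 1)"
  have "rel_ext (v_NC1 E V) p (insert x S) - rel_ext (v_NC1 E V) p S
      = (\<Sum>j\<in>V. (\<Prod>i\<in>S. Q j i) - Q j x * (\<Prod>i\<in>S. Q j i))"
    using assms finite_subset[OF assms(2,1)]
    by (simp add: rel_ext_v_NC1 Q_def sum_subtractf[symmetric])
  also have "\<dots> = (\<Sum>j\<in>V. (if x = j \<or> E x j then p x else 0) * (\<Prod>i\<in>S. Q j i))"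
    by (intro sum.cong) (auto simp: Q_def algebra_simps)
  also have "\<dots> = p x * (\<Sum>j\<in>V. if x = j \<or> E x j then \<Prod>i\<in>S. Q j i else 0)"
    unfolding sum_distrib_left by (intro sum.cong) auto
  also have "\<dots> = p x * (\<Sum>j\<in>{j\<in>V. x = j \<or> E x j}. \<Prod>i\<in>S. Q j i)"
    using assms(1) by (simp add: sum.inter_filter)
  finally show ?thesis
    unfolding Q_def .
qed

lemma has_integral_shapley_density:
  assumes "finite V"
  shows "(shapley_density E V x p has_integral
     (\<Sum>j\<in>{j\<in>V. x = j \<or> E x j}.
        prod_integral (\<lambda>i. if i = j \<or> E i j then 1 - p i else 1) (V - {x}))) {0..1}"
proof -
  define Q where "Q = (\<lambda>j i. if i = j \<or> E i j then 1 - p i else 1)"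
  have "(\<lambda>t. \<Prod>i\<in>V - {x}. 1 - t + t * Q j i)
      = (\<lambda>t. \<Prod>i\<in>V - {x}. if i = j \<or> E i j then 1 - t * p i else 1)" for j
    by (intro ext prod.cong) (auto simp: Q_def algebra_simps)
  then have "((\<lambda>t. \<Prod>i\<in>V - {x}. if i = j \<or> E i j then 1 - t * p i else 1)
      has_integral prod_integral (Q j) (V - {x})) {0..1}" for j
    by (metis has_integral_prod_integral)
  then show ?thesis
    unfolding shapley_density_def[abs_def] Q_def
    by (rule has_integral_sum[rotated]) (simp add: assms)
qed

lemma shapley_rel_ext_v_NC1:
  assumes "finite V" "x \<in> V"
  shows "shapley V (rel_ext (v_NC1 E V) p) x = p x * integral {0..1} (shapley_density E V x p)"
proof -
  define Q where "Q = (\<lambda>j i. if i = j \<or> E i j then 1 - p i else 1)"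
  define N where "N = {j\<in>V. x = j \<or> E x j}"
  define P where "P = (\<lambda>\<pi>. set (takeWhile (\<lambda>y. y \<noteq> x) \<pi>))"
  have "rel_ext (v_NC1 E V) p (P \<pi> \<union> {x}) - rel_ext (v_NC1 E V) p (P \<pi>)
      = p x * (\<Sum>j\<in>N. \<Prod>i\<in>P \<pi>. Q j i)" if "\<pi> \<in> permutations_of_set V" for \<pi>
  proof -
    have "P \<pi> \<subseteq> V" "x \<notin> P \<pi>"
      using that unfolding P_def by (auto dest: permutations_of_setD set_takeWhileD)
    then show ?thesis
      using rel_ext_v_NC1_insert[OF assms(1) _ assms(2)] by (simp add: Q_def N_def)
  qed
  then have "shapley V (rel_ext (v_NC1 E V) p) x
      = (\<Sum>\<pi>\<in>permutations_of_set V. p x * (\<Sum>j\<in>N. \<Prod>i\<in>P \<pi>. Q j i)) / fact (card V)"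
    unfolding shapley_def by (simp add: P_def)
  also have "\<dots> = p x * (\<Sum>j\<in>N. (\<Sum>\<pi>\<in>permutations_of_set V. \<Prod>i\<in>P \<pi>. Q j i) / fact (card V))"
    by (simp add: sum.swap[of _ "permutations_of_set V"] sum_distrib_left sum_divide_distrib)
  also have "\<dots> = p x * (\<Sum>j\<in>N. prod_integral (Q j) (V - {x}))"
    unfolding P_def using assms by (simp add: sum_permutations_prod_takeWhile)
  also have "\<dots> = p x * integral {0..1} (shapley_density E V x p)"
    using integral_unique[OF has_integral_shapley_density[OF assms(1)]] by (simp add: Q_def N_def)
  finally show ?thesis .
qed

lemma shapley_rel_ext_v_NC1_mono:
  assumes "finite V" "x \<in> V" "p x = q x" "0 \<le> p x"
    and "\<And>t. 0 \<le> t \<Longrightarrow> t \<le> 1 \<Longrightarrow> shapley_density E V x p t \<le> shapley_density E V x q t"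
  shows "shapley V (rel_ext (v_NC1 E V) p) x \<le> shapley V (rel_ext (v_NC1 E V) q) x"
proof -
  have "integral {0..1} (shapley_density E V x p) \<le> integral {0..1} (shapley_density E V x q)"
    using assms(5) has_integral_integrable[OF has_integral_shapley_density[OF assms(1)]]
    by (intro integral_le) auto
  then show ?thesis
    using assms by (simp add: shapley_rel_ext_v_NC1 mult_left_mono)
qed

lemma shapley_empty_rel_ext: "shapley {} (rel_ext v p) x = p x * (v {x} - v {})"
  by (simp add: shapley_def rel_ext_def Pi_TS_def Pow_insert algebra_simps)

lemma shapley_density_antimono:
  assumes "0 \<le> t" "t \<le> 1" "\<forall>i\<in>V - {x}. p i \<le> q i \<and> q i \<le> 1"
  shows "shapley_density E V x q t \<le> shapley_density E V x p t"
proof -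
  have "t * q i \<le> 1" if "i \<in> V - {x}" for i
    using assms mult_left_mono[of "q i" 1 t] that by auto
  then show ?thesis
    unfolding shapley_density_def
    by (intro sum_mono prod_mono) (use assms in \<open>auto intro: mult_left_mono\<close>)
qed

lemma shapley_density_complete_graph:
  "finite V \<Longrightarrow> shapley_density complete_graph V x p t = real (card V) * (\<Prod>i\<in>V - {x}. 1 - t * p i)"
  unfolding shapley_density_def complete_graph_def by (simp add: if_distrib)

lemma shapley_density_star_center:
  assumes "finite V" "x \<in> V"
  shows "shapley_density (star_graph x) V x p t
    = (\<Prod>i\<in>V - {x}. 1 - t * p i) + (\<Sum>j\<in>V - {x}. 1 - t * p j)"
proof -
  define f where "f = (\<lambda>j. \<Prod>i\<in>V - {x}. if i = j \<or> star_graph x i j then 1 - t * p i else 1)"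
  have "{j\<in>V. x = j \<or> star_graph x x j} = V"
    unfolding star_graph_def by auto
  then have "shapley_density (star_graph x) V x p t = f x + (\<Sum>j\<in>V - {x}. f j)"
    using assms by (simp add: shapley_density_def f_def sum.remove)
  also have "f x = (\<Prod>i\<in>V - {x}. 1 - t * p i)"
    unfolding f_def star_graph_def by (intro prod.cong) auto
  also have "f j = 1 - t * p j" if "j \<in> V - {x}" for j
  proof -
    have "f j = (\<Prod>i\<in>V - {x}. if i = j then 1 - t * p i else 1)"
      unfolding f_def star_graph_def using that by (intro prod.cong) auto
    then show ?thesis
      using that assms(1) by (simp add: prod.delta)
  qed
  then have "(\<Sum>j\<in>V - {x}. f j) = (\<Sum>j\<in>V - {x}. 1 - t * p j)"
    by (rule sum.cong[OF refl])
  finally show ?thesis .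
qed

lemma shapley_density_star_leaf:
  assumes "finite V" "x \<in> V" "c \<in> V" "c \<noteq> x"
  shows "shapley_density (star_graph c) V x p t
    = (1 - t * p c) * (1 + (\<Prod>i\<in>V - {x, c}. 1 - t * p i))"
proof -
  define f where "f = (\<lambda>j. \<Prod>i\<in>V - {x}. if i = j \<or> star_graph c i j then 1 - t * p i else 1)"
  have "{j\<in>V. x = j \<or> star_graph c x j} = {x, c}"
    using assms unfolding star_graph_def by auto
  then have "shapley_density (star_graph c) V x p t = f x + f c"
    using assms by (simp add: shapley_density_def f_def)
  also have "f x = (\<Prod>i\<in>V - {x}. if i = c then 1 - t * p i else 1)"
    unfolding f_def star_graph_def using assms(4) by (intro prod.cong) auto
  also have "\<dots> = 1 - t * p c"
    using assms by (simp add: prod.delta)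
  also have "f c = (\<Prod>i\<in>V - {x}. 1 - t * p i)"
    unfolding f_def star_graph_def by (intro prod.cong) auto
  also have "\<dots> = (1 - t * p c) * (\<Prod>i\<in>V - {x, c}. 1 - t * p i)"
    using assms by (simp add: prod.remove[of "V - {x}" c] Diff_insert2[symmetric] insert_commute)
  finally show ?thesis
    by (simp add: algebra_simps)
qed

section \<open>Greedy raising of reliabilities\<close>

lemma mult_prod_le_mult_prod_diff:
  fixes H e :: "'a \<Rightarrow> real"
  assumes "finite K" "0 \<le> A" "\<forall>k\<in>K. A \<le> H k \<and> 0 \<le> e k \<and> e k \<le> H k"
  shows "(A - sum e K) * prod H K \<le> A * prod (\<lambda>k. H k - e k) K"
  using assms
proof (induction K rule: finite_induct)
  case empty
  then show ?case by simp
next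
  case (insert k K)
  have hk: "A \<le> H k" "0 \<le> e k" "e k \<le> H k" and sum_e: "0 \<le> sum e K"
    using insert by (auto intro: sum_nonneg)
  have prod_H: "0 \<le> prod H K"
    using insert.prems by (auto intro!: prod_nonneg intro: order_trans)
  have "(A - sum e (insert k K)) * prod H (insert k K) = ((A - e k - sum e K) * H k) * prod H K"
    using insert by (simp add: algebra_simps)
  also have "\<dots> \<le> ((H k - e k) * (A - sum e K)) * prod H K"
  proof (rule mult_right_mono[OF _ prod_H])
    have "(H k - e k) * (A - sum e K) - (A - e k - sum e K) * H k = e k * (H k - A + sum e K)"
      by (simp add: algebra_simps)
    also have "\<dots> \<ge> 0"
      using hk sum_e by simp
    finally show "(A - e k - sum e K) * H k \<le> (H k - e k) * (A - sum e K)"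
      by simp
  qed
  also have "\<dots> \<le> (H k - e k) * (A * prod (\<lambda>k. H k - e k) K)"
    using insert hk by (simp add: mult.assoc mult_left_mono)
  also have "\<dots> = A * prod (\<lambda>k. H k - e k) (insert k K)"
    using insert by simp
  finally show ?case .
qed

lemma prod_le_prod_diff_add_sum:
  fixes H e :: "'a \<Rightarrow> real"
  assumes "finite K" "\<forall>k\<in>K. 0 \<le> e k \<and> e k \<le> H k \<and> H k \<le> 1"
  shows "prod H K \<le> prod (\<lambda>k. H k - e k) K + sum e K"
  using assms
proof (induction K rule: finite_induct)
  case empty
  then show ?case by simp
next
  case (insert k K)
  have hk: "0 \<le> e k" "e k \<le> H k" "H k \<le> 1" and sum_e: "0 \<le> sum e K"
    using insert by (auto intro: sum_nonneg)
  have "\<forall>j\<in>K. 0 \<le> H j \<and> H j \<le> 1"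
    using insert.prems by (auto intro: order_trans)
  then have prod_H: "0 \<le> prod H K" "prod H K \<le> 1"
    by (auto intro: prod_nonneg prod_le_1)
  have "prod H (insert k K) = H k * prod H K"
    using insert by simp
  also have "\<dots> \<le> (H k - e k) * (prod H K - sum e K) + e k + sum e K"
  proof -
    have "(H k - e k) * (prod H K - sum e K) + e k + sum e K - H k * prod H K
        = (1 - H k) * sum e K + e k * (1 - prod H K) + e k * sum e K"
      by (simp add: algebra_simps)
    also have "\<dots> \<ge> 0"
      using hk sum_e prod_H by simp
    finally show ?thesis
      by simp
  qed
  also have "\<dots> \<le> (H k - e k) * prod (\<lambda>k. H k - e k) K + e k + sum e K"
    using insert hk by (simp add: mult_left_mono)
  also have "\<dots> = prod (\<lambda>k. H k - e k) (insert k K) + sum e (insert k K)"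
    using insert by simp
  finally show ?case .
qed

text \<open>Read \<open>(c, r)\<close> as the profile obtained from \<open>(qa, q)\<close> by moving the raises \<open>q - r\<close>
  onto the first factor, whose value \<open>qa\<close> dominates \<open>r\<close>: this can only decrease the product.\<close>

lemma prod_transfer_raise_le:
  fixes r q :: "'a \<Rightarrow> real"
  assumes "finite S" "0 \<le> t" "t \<le> 1" "qa \<le> 1" "\<forall>k\<in>S. r k \<le> q k \<and> q k \<le> 1 \<and> r k \<le> qa"
    and "qa + (\<Sum>k\<in>S. q k - r k) \<le> c"
  shows "(1 - t * c) * (\<Prod>k\<in>S. 1 - t * r k) \<le> (1 - t * qa) * (\<Prod>k\<in>S. 1 - t * q k)"
proof -
  have factors: "1 - t * qa \<le> 1 - t * r k \<and> 0 \<le> t * (q k - r k) \<and> t * (q k - r k) \<le> 1 - t * r k"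
    if "k \<in> S" for k
  proof -
    have "r k \<le> qa" "r k \<le> q k" "q k \<le> 1"
      using assms(5) that by auto
    then have "t * r k \<le> t * qa" "t * r k \<le> t * q k" "t * q k \<le> 1"
      using assms(2,3) mult_left_mono[of "q k" 1 t] by (auto intro: mult_left_mono)
    then show ?thesis
      by (simp add: algebra_simps)
  qed
  have "(1 - t * c) * (\<Prod>k\<in>S. 1 - t * r k)
      \<le> (1 - t * qa - (\<Sum>k\<in>S. t * (q k - r k))) * (\<Prod>k\<in>S. 1 - t * r k)"
  proof (rule mult_right_mono)
    show "1 - t * c \<le> 1 - t * qa - (\<Sum>k\<in>S. t * (q k - r k))"
      using assms mult_left_mono[OF assms(6) assms(2)] by (simp add: sum_distrib_left algebra_simps)
    show "0 \<le> (\<Prod>k\<in>S. 1 - t * r k)"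
      using factors by (intro prod_nonneg) (meson order_trans)
  qed
  also have "\<dots> \<le> (1 - t * qa) * (\<Prod>k\<in>S. (1 - t * r k) - t * (q k - r k))"
    using assms(1-4) factors mult_left_mono[of qa 1 t]
    by (intro mult_prod_le_mult_prod_diff) auto
  also have "\<dots> = (1 - t * qa) * (\<Prod>k\<in>S. 1 - t * q k)"
    by (simp add: algebra_simps)
  finally show ?thesis .
qed

lemma one_plus_prod_transfer_raise_le:
  fixes r q :: "'a \<Rightarrow> real"
  assumes "finite S" "0 \<le> t" "t \<le> 1" "0 \<le> qa" "\<forall>k\<in>S. 0 \<le> r k \<and> r k \<le> q k \<and> q k \<le> 1"
    and "qa + (\<Sum>k\<in>S. q k - r k) \<le> c" "c \<le> 1"
  shows "(1 - t * c) * (1 + (\<Prod>k\<in>S. 1 - t * r k)) \<le> (1 - t * qa) * (1 + (\<Prod>k\<in>S. 1 - t * q k))"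
proof -
  define D where "D = (\<Sum>k\<in>S. q k - r k)"
  define PQ where "PQ = (\<Prod>k\<in>S. 1 - t * q k)"
  have factors: "0 \<le> t * (q k - r k) \<and> t * (q k - r k) \<le> 1 - t * r k
      \<and> 1 - t * r k \<le> 1 \<and> 0 \<le> 1 - t * q k"
    if "k \<in> S" for k
  proof -
    have "0 \<le> r k" "r k \<le> q k" "q k \<le> 1"
      using assms(5) that by auto
    then have "0 \<le> t * r k" "t * r k \<le> t * q k" "t * q k \<le> 1"
      using assms(2,3) mult_left_mono[of "q k" 1 t] by (auto intro: mult_left_mono)
    then show ?thesis
      by (simp add: algebra_simps)
  qed
  have D: "0 \<le> D" and PQ: "0 \<le> PQ"
    using assms(5) factors unfolding D_def PQ_def by (auto intro: sum_nonneg prod_nonneg)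
  have "(\<Prod>k\<in>S. 1 - t * r k) \<le> (\<Prod>k\<in>S. (1 - t * r k) - t * (q k - r k)) + (\<Sum>k\<in>S. t * (q k - r k))"
    using assms(1) factors by (intro prod_le_prod_diff_add_sum) auto
  then have prod_r: "(\<Prod>k\<in>S. 1 - t * r k) \<le> PQ + t * D"
    unfolding PQ_def D_def by (simp add: sum_distrib_left algebra_simps)
  have c: "1 - t * c \<le> 1 - t * qa - t * D" "0 \<le> 1 - t * c"
    using assms mult_left_mono[OF assms(6) assms(2)] mult_left_mono[of c 1 t]
    unfolding D_def by (auto simp: algebra_simps)
  have "0 \<le> (\<Prod>k\<in>S. 1 - t * r k)"
    using factors by (intro prod_nonneg) (meson order_trans)
  then have "(1 - t * c) * (1 + (\<Prod>k\<in>S. 1 - t * r k)) \<le> (1 - t * qa - t * D) * (1 + PQ + t * D)"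
    using c prod_r by (intro mult_mono) auto
  also have "\<dots> \<le> (1 - t * qa) * (1 + PQ)"
  proof -
    have "(1 - t * qa) * (1 + PQ) - (1 - t * qa - t * D) * (1 + PQ + t * D)
        = t * D * (t * qa + PQ + t * D)"
      by (simp add: algebra_simps)
    also have "\<dots> \<ge> 0"
      using assms(2,4) D PQ by simp
    finally show ?thesis
      by simp
  qed
  finally show ?thesis
    unfolding PQ_def .
qed

definition raised_profiles :: "(nat \<Rightarrow> real) \<Rightarrow> nat set \<Rightarrow> real \<Rightarrow> (nat \<Rightarrow> real) set" where
  "raised_profiles ps S \<beta> = {q. (\<forall>j\<in>S. ps j \<le> q j \<and> q j \<le> 1) \<and> (\<Sum>j\<in>S. q j - ps j) \<le> \<beta>}"

lemma raised_profiles_exchange_max: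
  assumes "finite S" "a \<notin> S" "\<forall>k\<in>S. ps k \<le> ps a" "q \<in> raised_profiles ps (insert a S) \<beta>"
  obtains \<pi> where "\<pi> permutes insert a S" "q \<circ> \<pi> \<in> raised_profiles ps (insert a S) \<beta>"
    "\<forall>k\<in>S. q (\<pi> k) \<le> q (\<pi> a)"
proof -
  have "Max (q ` insert a S) \<in> q ` insert a S"
    using assms(1) by (intro Max_in) auto
  then obtain m where m: "m \<in> insert a S" "q m = Max (q ` insert a S)"
    by (metis imageE)
  have m_max: "q k \<le> q m" if "k \<in> insert a S" for k
    unfolding m(2) using assms(1) that by (intro Max_ge) auto
  define \<pi> where "\<pi> = Transposition.transpose a m"
  have perm: "\<pi> permutes insert a S"
    unfolding \<pi>_def using m(1) by (intro permutes_swap_id) auto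
  have "ps j \<le> q (\<pi> j) \<and> q (\<pi> j) \<le> 1" if "j \<in> insert a S" for j
    using assms(3,4) m(1) m_max that
    by (auto simp: \<pi>_def raised_profiles_def Transposition.transpose_def intro: order_trans)
  moreover have "(\<Sum>j\<in>insert a S. q (\<pi> j) - ps j) = (\<Sum>j\<in>insert a S. q j - ps j)"
    using sum.permute[OF perm, of q] by (simp add: sum_subtractf)
  moreover have "q (\<pi> k) \<le> q (\<pi> a)" if "k \<in> S" for k
    using m_max m(1) that by (auto simp: \<pi>_def Transposition.transpose_def)
  ultimately show ?thesis
    using that[OF perm] assms(4) by (simp add: raised_profiles_def)
qed

lemma raised_profiles_split_head:
  assumes "finite S" "a \<notin> S" "q \<in> raised_profiles ps (insert a S) \<beta>" "1 - ps a \<le> \<beta>"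
  obtains r where "r \<in> raised_profiles ps S (\<beta> - (1 - ps a))" "\<forall>k\<in>S. r k \<le> q k"
    "q a + (\<Sum>k\<in>S. q k - r k) \<le> 1"
proof -
  define c where "c = \<beta> - (1 - ps a)"
  define D where "D = (\<Sum>k\<in>S. q k - ps k)"
  define \<theta> where "\<theta> = (if D \<le> c then 1 else c / D)"
  define r where "r = (\<lambda>k. ps k + \<theta> * (q k - ps k))"
  have q: "\<forall>j\<in>insert a S. ps j \<le> q j \<and> q j \<le> 1" "q a - ps a + D \<le> \<beta>"
    using assms unfolding raised_profiles_def D_def by auto
  have \<theta>: "0 \<le> \<theta>" "\<theta> \<le> 1" "\<theta> * D = min D c"
    using assms(4) by (auto simp: \<theta>_def c_def)
  have r: "ps k \<le> r k \<and> r k \<le> q k" if "k \<in> S" for k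
    using q(1) \<theta> that mult_left_mono[of 0 "q k - ps k" \<theta>] mult_left_mono[of \<theta> 1 "q k - ps k"]
    by (auto simp: r_def algebra_simps)
  have sum_r: "(\<Sum>k\<in>S. r k - ps k) = \<theta> * D"
    by (simp add: r_def D_def sum_distrib_left)
  have sum_q_r: "(\<Sum>k\<in>S. q k - r k) = D - \<theta> * D"
    unfolding D_def sum_distrib_left sum_subtractf[symmetric]
    by (intro sum.cong) (auto simp: r_def algebra_simps)
  show ?thesis
  proof (rule that)
    show "r \<in> raised_profiles ps S (\<beta> - (1 - ps a))"
      using r q(1) sum_r \<theta>(3) unfolding raised_profiles_def c_def by (auto intro: order_trans)
    show "\<forall>k\<in>S. r k \<le> q k"
      using r by auto
    show "q a + (\<Sum>k\<in>S. q k - r k) \<le> 1"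
      using sum_q_r \<theta>(3) q unfolding c_def by (auto simp: min_def)
  qed
qed

lemma greedy_notin: "j \<notin> set \<sigma> \<Longrightarrow> greedy R ps \<sigma> b p j = p j"
  by (induction \<sigma> arbitrary: b p) auto

lemma greedy_bounds:
  assumes "distinct \<sigma>" "\<forall>j\<in>set \<sigma>. p j = ps j \<and> ps j \<le> 1" "0 \<le> b" "0 < R" "j \<in> set \<sigma>"
  shows "ps j \<le> greedy R ps \<sigma> b p j \<and> greedy R ps \<sigma> b p j \<le> 1"
  using assms
proof (induction \<sigma> arbitrary: b p)
  case Nil
  then show ?case by simp
next
  case (Cons a \<sigma>)
  show ?case
  proof (cases "R * (1 - ps a) \<le> b")
    case True
    then show ?thesis
      using Cons by (cases "j = a") (auto simp: greedy_notin intro!: Cons.IH)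
  next
    case False
    then have "b / R < 1 - ps a"
      using Cons.prems by (simp add: divide_less_eq mult.commute)
    then show ?thesis
      using False Cons.prems by auto
  qed
qed

lemma greedy_total_raise:
  assumes "distinct \<sigma>" "\<forall>j\<in>set \<sigma>. p j = ps j \<and> ps j \<le> 1" "0 \<le> b" "0 < R"
  shows "(\<Sum>j\<in>set \<sigma>. greedy R ps \<sigma> b p j - ps j) = min (\<Sum>j\<in>set \<sigma>. 1 - ps j) (b / R)"
  using assms
proof (induction \<sigma> arbitrary: b p)
  case Nil
  then show ?case by simp
next
  case (Cons a \<sigma>)
  have "0 \<le> (\<Sum>j\<in>set \<sigma>. 1 - ps j)"
    using Cons.prems by (intro sum_nonneg) auto
  show ?case
  proof (cases "R * (1 - ps a) \<le> b")
    case True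
    let ?g = "greedy R ps \<sigma> (b - R * (1 - ps a)) (p(a := 1))"
    have "(\<Sum>j\<in>set \<sigma>. ?g j - ps j) = min (\<Sum>j\<in>set \<sigma>. 1 - ps j) ((b - R * (1 - ps a)) / R)"
      using Cons.prems True by (intro Cons.IH) auto
    moreover have "?g a = 1"
      using Cons.prems by (simp add: greedy_notin)
    ultimately show ?thesis
      using Cons.prems True by (simp add: diff_divide_distrib)
  next
    case False
    then have "b / R < 1 - ps a"
      using Cons.prems by (simp add: divide_less_eq mult.commute)
    moreover have "(\<Sum>j\<in>set \<sigma>. (p(a := ps a + b / R)) j - ps j) = 0"
      using Cons.prems by (intro sum.neutral) auto
    ultimately show ?thesis
      using False Cons.prems \<open>0 \<le> (\<Sum>j\<in>set \<sigma>. 1 - ps j)\<close> by simp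
  qed
qed

lemma greedy_in_raised_profiles:
  assumes "distinct \<sigma>" "\<forall>j\<in>set \<sigma>. p j = ps j \<and> ps j \<le> 1" "0 \<le> b" "0 < R"
  shows "greedy R ps \<sigma> b p \<in> raised_profiles ps (set \<sigma>) (b / R)"
  using greedy_bounds[OF assms] greedy_total_raise[OF assms] by (simp add: raised_profiles_def)

lemma greedy_sum_ge:
  assumes "distinct \<sigma>" "\<forall>j\<in>set \<sigma>. p j = ps j" "0 \<le> b" "0 < R"
    and "q \<in> raised_profiles ps (set \<sigma>) (b / R)"
  shows "(\<Sum>j\<in>set \<sigma>. q j) \<le> (\<Sum>j\<in>set \<sigma>. greedy R ps \<sigma> b p j)"
proof -
  have q: "\<forall>j\<in>set \<sigma>. ps j \<le> q j \<and> q j \<le> 1" "(\<Sum>j\<in>set \<sigma>. q j - ps j) \<le> b / R"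
    using assms(5) by (auto simp: raised_profiles_def)
  then have "(\<Sum>j\<in>set \<sigma>. greedy R ps \<sigma> b p j - ps j) = min (\<Sum>j\<in>set \<sigma>. 1 - ps j) (b / R)"
    using assms by (intro greedy_total_raise) (auto intro: order_trans)
  moreover have "(\<Sum>j\<in>set \<sigma>. q j - ps j) \<le> (\<Sum>j\<in>set \<sigma>. 1 - ps j)"
    using q by (intro sum_mono) auto
  ultimately show ?thesis
    using q(2) by (simp add: sum_subtractf)
qed

lemma raise_head_partially_le:
  assumes "finite S" "a \<notin> S" "\<forall>k\<in>S. ps k \<le> ps a" "0 \<le> t" "t \<le> 1"
    and "q \<in> raised_profiles ps (insert a S) \<beta>"
  shows "(1 - t * (ps a + \<beta>)) * (\<Prod>k\<in>S. 1 - t * ps k) \<le> (\<Prod>j\<in>insert a S. 1 - t * q j)"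
proof -
  have "(1 - t * (ps a + \<beta>)) * (\<Prod>k\<in>S. 1 - t * ps k) \<le> (1 - t * q a) * (\<Prod>k\<in>S. 1 - t * q k)"
    using assms
    by (intro prod_transfer_raise_le) (auto simp: raised_profiles_def intro: order_trans)
  then show ?thesis
    using assms(1,2) by simp
qed

lemma raise_head_to_one_le:
  assumes "finite S" "a \<notin> S" "\<forall>k\<in>S. ps k \<le> ps a" "0 \<le> t" "t \<le> 1"
    and "q \<in> raised_profiles ps (insert a S) \<beta>" "1 - ps a \<le> \<beta>"
    and rest: "\<And>r. r \<in> raised_profiles ps S (\<beta> - (1 - ps a)) \<Longrightarrow> P \<le> (\<Prod>k\<in>S. 1 - t * r k)"
  shows "(1 - t) * P \<le> (\<Prod>j\<in>insert a S. 1 - t * q j)"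
proof -
  obtain \<pi> where \<pi>: "\<pi> permutes insert a S" "q \<circ> \<pi> \<in> raised_profiles ps (insert a S) \<beta>"
    "\<forall>k\<in>S. q (\<pi> k) \<le> q (\<pi> a)"
    using raised_profiles_exchange_max[OF assms(1-3,6)] .
  obtain r where r: "r \<in> raised_profiles ps S (\<beta> - (1 - ps a))" "\<forall>k\<in>S. r k \<le> q (\<pi> k)"
    "q (\<pi> a) + (\<Sum>k\<in>S. q (\<pi> k) - r k) \<le> 1"
    using raised_profiles_split_head[OF assms(1,2) \<pi>(2) assms(7)] by auto
  have "(1 - t) * P \<le> (1 - t * 1) * (\<Prod>k\<in>S. 1 - t * r k)"
    using rest[OF r(1)] assms(5) by (simp add: mult_left_mono)
  also have "\<dots> \<le> (1 - t * q (\<pi> a)) * (\<Prod>k\<in>S. 1 - t * q (\<pi> k))"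
    using assms(1,4,5) \<pi>(2,3) r(2,3)
    by (intro prod_transfer_raise_le) (auto simp: raised_profiles_def intro: order_trans)
  also have "\<dots> = (\<Prod>j\<in>insert a S. 1 - t * q (\<pi> j))"
    using assms(1,2) by simp
  also have "\<dots> = (\<Prod>j\<in>insert a S. 1 - t * q j)"
    using prod.permute[OF \<pi>(1), of "\<lambda>j. 1 - t * q j"] by (simp add: comp_def)
  finally show ?thesis .
qed

lemma greedy_prod_le:
  assumes "distinct \<sigma>" "sorted_wrt (\<lambda>i j. ps j \<le> ps i) \<sigma>" "\<forall>j\<in>set \<sigma>. p j = ps j"
    and "0 < R" "0 \<le> b" "0 \<le> t" "t \<le> 1" "q \<in> raised_profiles ps (set \<sigma>) (b / R)"
  shows "(\<Prod>j\<in>set \<sigma>. 1 - t * greedy R ps \<sigma> b p j) \<le> (\<Prod>j\<in>set \<sigma>. 1 - t * q j)"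
  using assms
proof (induction \<sigma> arbitrary: b p q)
  case Nil
  then show ?case by simp
next
  case (Cons a \<sigma>)
  have a: "a \<notin> set \<sigma>" "\<forall>k\<in>set \<sigma>. ps k \<le> ps a"
    and q: "q \<in> raised_profiles ps (insert a (set \<sigma>)) (b / R)"
    using Cons.prems by auto
  show ?case
  proof (cases "R * (1 - ps a) \<le> b")
    case True
    let ?g = "greedy R ps \<sigma> (b - R * (1 - ps a)) (p(a := 1))"
    have "(1 - t) * (\<Prod>j\<in>set \<sigma>. 1 - t * ?g j) \<le> (\<Prod>j\<in>insert a (set \<sigma>). 1 - t * q j)"
    proof (rule raise_head_to_one_le[OF _ a _ _ q])
      show "1 - ps a \<le> b / R"
        using True Cons.prems by (simp add: pos_le_divide_eq mult.commute)
      fix r assume "r \<in> raised_profiles ps (set \<sigma>) (b / R - (1 - ps a))"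
      then show "(\<Prod>j\<in>set \<sigma>. 1 - t * ?g j) \<le> (\<Prod>k\<in>set \<sigma>. 1 - t * r k)"
        using Cons.prems True a by (intro Cons.IH) (auto simp: diff_divide_distrib)
    qed (use Cons.prems in auto)
    moreover have "?g a = 1"
      using a by (simp add: greedy_notin)
    ultimately show ?thesis
      using True a by simp
  next
    case False
    have "(1 - t * (ps a + b / R)) * (\<Prod>k\<in>set \<sigma>. 1 - t * ps k) \<le> (\<Prod>j\<in>insert a (set \<sigma>). 1 - t * q j)"
      using Cons.prems a q by (intro raise_head_partially_le) auto
    moreover have "(\<Prod>k\<in>set \<sigma>. 1 - t * (p(a := ps a + b / R)) k) = (\<Prod>k\<in>set \<sigma>. 1 - t * ps k)"
      using Cons.prems a by (intro prod.cong) auto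
    ultimately show ?thesis
      using False a by simp
  qed
qed

lemma greedy_head_one_plus_prod_le:
  assumes "a \<notin> set \<tau>" "distinct \<tau>" "sorted_wrt (\<lambda>i j. ps j \<le> ps i) \<tau>"
    and "\<forall>j\<in>set (a # \<tau>). 0 \<le> ps j \<and> p j = ps j"
    and "0 < R" "0 \<le> b" "0 \<le> t" "t \<le> 1" "q \<in> raised_profiles ps (set (a # \<tau>)) (b / R)"
  shows "(1 - t * greedy R ps (a # \<tau>) b p a) * (1 + (\<Prod>j\<in>set \<tau>. 1 - t * greedy R ps (a # \<tau>) b p j))
     \<le> (1 - t * q a) * (1 + (\<Prod>j\<in>set \<tau>. 1 - t * q j))"
proof (cases "R * (1 - ps a) \<le> b")
  case True
  let ?g = "greedy R ps \<tau> (b - R * (1 - ps a)) (p(a := 1))"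
  have q: "q \<in> raised_profiles ps (insert a (set \<tau>)) (b / R)"
    using assms(9) by simp
  obtain r where r: "r \<in> raised_profiles ps (set \<tau>) (b / R - (1 - ps a))" "\<forall>k\<in>set \<tau>. r k \<le> q k"
    "q a + (\<Sum>k\<in>set \<tau>. q k - r k) \<le> 1"
    using raised_profiles_split_head[OF _ assms(1) q] True assms(5)
    by (auto simp: pos_le_divide_eq mult.commute)
  have "(\<Prod>j\<in>set \<tau>. 1 - t * ?g j) \<le> (\<Prod>j\<in>set \<tau>. 1 - t * r j)"
    using assms r(1) True by (intro greedy_prod_le) (auto simp: diff_divide_distrib)
  then have "(1 - t) * (1 + (\<Prod>j\<in>set \<tau>. 1 - t * ?g j)) \<le> (1 - t * 1) * (1 + (\<Prod>j\<in>set \<tau>. 1 - t * r j))"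
    using assms(8) by (simp add: mult_left_mono)
  also have "\<dots> \<le> (1 - t * q a) * (1 + (\<Prod>j\<in>set \<tau>. 1 - t * q j))"
    using assms(4,7,8) q r
    by (intro one_plus_prod_transfer_raise_le) (auto simp: raised_profiles_def intro: order_trans)
  finally show ?thesis
    using True assms(1) by (simp add: greedy_notin)
next
  case False
  then have "b / R < 1 - ps a"
    using assms(5) by (simp add: divide_less_eq mult.commute)
  then have "(1 - t * (ps a + b / R)) * (1 + (\<Prod>j\<in>set \<tau>. 1 - t * ps j))
      \<le> (1 - t * q a) * (1 + (\<Prod>j\<in>set \<tau>. 1 - t * q j))"
    using assms(1,4,7,8,9)
    by (intro one_plus_prod_transfer_raise_le) (auto simp: raised_profiles_def intro: order_trans)
  moreover have "(\<Prod>j\<in>set \<tau>. 1 - t * (p(a := ps a + b / R)) j) = (\<Prod>j\<in>set \<tau>. 1 - t * ps j)"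
    using assms(1,4) by (intro prod.cong) auto
  ultimately show ?thesis
    using False by simp
qed

section \<open>Optimality of the greedy attack\<close>

lemma raised_profiles_max_of_feasible:
  assumes "feasible V x px ps L R B q" "0 \<le> L" "0 < R" "\<forall>j\<in>V - {x}. ps j \<le> 1"
  shows "(\<lambda>j. max (q j) (ps j)) \<in> raised_profiles ps (V - {x}) (B / R)"
proof -
  have "R * (\<Sum>j\<in>V - {x}. max (q j) (ps j) - ps j) = (\<Sum>j\<in>V - {x}. R * max 0 (q j - ps j))"
    unfolding sum_distrib_left by (intro sum.cong) (auto simp: max_def)
  also have "\<dots> \<le> (\<Sum>j\<in>V - {x}. cost L R (ps j) (q j))"
    using assms(2,3) by (intro sum_mono) (auto simp: cost_def max_def)
  also have "\<dots> \<le> B"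
    using assms(1) by (simp add: feasible_def)
  finally show ?thesis
    using assms by (auto simp: raised_profiles_def feasible_def pos_le_divide_eq mult.commute)
qed

lemma feasible_if_raised_profiles:
  assumes "g \<in> raised_profiles ps (V - {x}) (B / R)" "g x = px" "0 < R" "\<forall>j\<in>V - {x}. 0 \<le> ps j"
  shows "feasible V x px ps L R B g"
proof -
  have "(\<Sum>j\<in>V - {x}. cost L R (ps j) (g j)) = R * (\<Sum>j\<in>V - {x}. g j - ps j)"
    unfolding sum_distrib_left
  proof (intro sum.cong refl)
    fix j assume "j \<in> V - {x}"
    then have "ps j \<le> g j"
      using assms(1) by (simp add: raised_profiles_def)
    then show "cost L R (ps j) (g j) = R * (g j - ps j)"
      by (simp add: cost_def)
  qed
  also have "\<dots> \<le> B"
    using assms(1,3) by (simp add: raised_profiles_def pos_le_divide_eq mult.commute)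
  finally show ?thesis
    using assms by (auto simp: feasible_def raised_profiles_def intro: order_trans)
qed

lemma optimal_attack_if_shapley_density_le:
  assumes "finite V" "x \<in> V \<or> V = {}" "0 \<le> L" "0 < R" "\<forall>j\<in>V - {x}. 0 \<le> ps j \<and> ps j \<le> 1" "0 \<le> px"
    and g: "g \<in> raised_profiles ps (V - {x}) (B / R)" "g x = px"
    and le: "\<And>q t. x \<in> V \<Longrightarrow> q \<in> raised_profiles ps (V - {x}) (B / R) \<Longrightarrow> 0 \<le> t \<Longrightarrow> t \<le> 1 \<Longrightarrow>
        shapley_density E V x g t \<le> shapley_density E V x q t"
  shows "optimal_attack E V x px ps L R B g"
  unfolding optimal_attack_def
proof (intro conjI allI impI)
  show "feasible V x px ps L R B g"
    using assms(4,5) by (intro feasible_if_raised_profiles[OF g]) auto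
  fix q assume q: "feasible V x px ps L R B q"
  show "shapley V (rel_ext (v_NC1 E V) g) x \<le> shapley V (rel_ext (v_NC1 E V) q) x"
  proof (cases "V = {}")
    case True
    then show ?thesis
      using g(2) q by (simp add: shapley_empty_rel_ext feasible_def)
  next
    case False
    then have x: "x \<in> V"
      using assms(2) by auto
    define q' where "q' = (\<lambda>j. max (q j) (ps j))"
    have q': "q' \<in> raised_profiles ps (V - {x}) (B / R)"
      unfolding q'_def using assms(3-5) by (intro raised_profiles_max_of_feasible[OF q]) auto
    have "shapley_density E V x g t \<le> shapley_density E V x q t" if "0 \<le> t" "t \<le> 1" for t
    proof -
      have "shapley_density E V x g t \<le> shapley_density E V x q' t"
        by (rule le[OF x q' that])
      also have "\<dots> \<le> shapley_density E V x q t"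
        using q assms(5) that by (intro shapley_density_antimono) (auto simp: feasible_def q'_def)
      finally show ?thesis .
    qed
    then show ?thesis
      using g(2) q assms(1,6) x by (intro shapley_rel_ext_v_NC1_mono) (auto simp: feasible_def)
  qed
qed

lemma greedy_profile_in_raised_profiles:
  assumes "distinct \<sigma>" "set \<sigma> = V - {x}" "\<forall>j\<in>V - {x}. ps j \<le> 1" "0 < R" "0 \<le> B"
  shows "greedy_profile x px ps R B \<sigma> \<in> raised_profiles ps (V - {x}) (B / R)"
    and "greedy_profile x px ps R B \<sigma> x = px"
  using greedy_in_raised_profiles[of \<sigma> "ps(x := px)" ps B R] greedy_notin[of x \<sigma>] assms
  by (auto simp: greedy_profile_def)

theorem optimal_attack_greedy_complete_or_star_center:
  assumes "E = complete_graph \<or> E = star_graph x" "finite V" "x \<in> V \<or> V = {}"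
    and "distinct \<sigma>" "set \<sigma> = V - {x}" "sorted_wrt (\<lambda>i j. ps j \<le> ps i) \<sigma>"
    and "\<forall>j\<in>V - {x}. 0 \<le> ps j \<and> ps j \<le> 1" "0 \<le> px" "0 \<le> L" "0 < R" "0 \<le> B"
  shows "optimal_attack E V x px ps L R B (greedy_profile x px ps R B \<sigma>)"
proof (rule optimal_attack_if_shapley_density_le)
  define g where "g = greedy_profile x px ps R B \<sigma>"
  fix q and t :: real
  assume x: "x \<in> V" and q: "q \<in> raised_profiles ps (V - {x}) (B / R)" and t: "0 \<le> t" "t \<le> 1"
  have p: "\<forall>j\<in>set \<sigma>. (ps(x := px)) j = ps j"
    using assms(5) by auto
  have prod: "(\<Prod>j\<in>V - {x}. 1 - t * g j) \<le> (\<Prod>j\<in>V - {x}. 1 - t * q j)"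
    unfolding g_def greedy_profile_def assms(5)[symmetric]
    by (rule greedy_prod_le[OF assms(4,6) p assms(10,11) t]) (use q assms(5) in simp)
  show "shapley_density E V x g t \<le> shapley_density E V x q t"
    using assms(1)
  proof
    assume "E = complete_graph"
    then show ?thesis
      using prod assms(2) by (simp add: shapley_density_complete_graph mult_left_mono)
  next
    assume E: "E = star_graph x"
    have "(\<Sum>j\<in>V - {x}. q j) \<le> (\<Sum>j\<in>V - {x}. g j)"
      unfolding g_def greedy_profile_def assms(5)[symmetric]
      by (rule greedy_sum_ge[OF assms(4) p assms(11,10)]) (use q assms(5) in simp)
    then have "(\<Sum>j\<in>V - {x}. 1 - t * g j) \<le> (\<Sum>j\<in>V - {x}. 1 - t * q j)"
      using t by (simp add: sum_subtractf sum_distrib_left[symmetric] mult_left_mono)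
    then show ?thesis
      using prod E assms(2) x by (simp add: shapley_density_star_center)
  qed
qed (use assms greedy_profile_in_raised_profiles in auto)

theorem optimal_attack_greedy_star_leaf:
  assumes "finite V" "x \<in> V" "c \<in> V" "c \<noteq> x"
    and "distinct \<tau>" "set \<tau> = V - {x, c}" "sorted_wrt (\<lambda>i j. ps j \<le> ps i) \<tau>"
    and "\<forall>j\<in>V - {x}. 0 \<le> ps j \<and> ps j \<le> 1" "0 \<le> px" "0 \<le> L" "0 < R" "0 \<le> B"
  shows "optimal_attack (star_graph c) V x px ps L R B (greedy_profile x px ps R B (c # \<tau>))"
proof (rule optimal_attack_if_shapley_density_le)
  define g where "g = greedy_profile x px ps R B (c # \<tau>)"
  have set: "set (c # \<tau>) = V - {x}"
    using assms(2-4,6) by auto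
  fix q and t :: real
  assume q: "q \<in> raised_profiles ps (V - {x}) (B / R)" and t: "0 \<le> t" "t \<le> 1"
  have "(1 - t * g c) * (1 + (\<Prod>j\<in>set \<tau>. 1 - t * g j))
      \<le> (1 - t * q c) * (1 + (\<Prod>j\<in>set \<tau>. 1 - t * q j))"
    unfolding g_def greedy_profile_def
    using assms(4-8,11,12) t q set by (intro greedy_head_one_plus_prod_le) auto
  then show "shapley_density (star_graph c) V x g t \<le> shapley_density (star_graph c) V x q t"
    using assms(1-4,6) by (simp add: shapley_density_star_leaf)
next
  have "distinct (c # \<tau>)" "set (c # \<tau>) = V - {x}"
    using assms(2-6) by auto
  then show "greedy_profile x px ps R B (c # \<tau>) \<in> raised_profiles ps (V - {x}) (B / R)"
    "greedy_profile x px ps R B (c # \<tau>) x = px"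
    using greedy_profile_in_raised_profiles assms(8,11,12) by auto
qed (use assms in auto)

theorem theorem4:
  fixes n :: nat and pstar :: "nat \<Rightarrow> real" and p1 L R B :: real
  assumes hpstar: "\<forall>j\<in>{2..n}. 0 < pstar j \<and> pstar j \<le> 1"
    and hp1: "0 \<le> p1" "p1 \<le> 1"
    and hL: "L > 0" and hR: "R > 0" and hB: "B \<ge> 0"
  shows
   "(\<forall>E \<sigma>. (E = complete_graph \<or> E = star_graph 1) \<longrightarrow>
        distinct \<sigma> \<longrightarrow> set \<sigma> = {2..n} \<longrightarrow>
        sorted_wrt (\<lambda>i j. pstar i \<ge> pstar j) \<sigma> \<longrightarrow>
        optimal_attack E {1..n} 1 p1 pstar L R B (greedy_profile 1 p1 pstar R B \<sigma>))
    \<and> (n \<ge> 2 \<longrightarrow> (\<forall>\<tau>. distinct \<tau> \<longrightarrow> set \<tau> = {3..n} \<longrightarrow>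
        sorted_wrt (\<lambda>i j. pstar i \<ge> pstar j) \<tau> \<longrightarrow>
        optimal_attack (star_graph 2) {1..n} 1 p1 pstar L R B
          (greedy_profile 1 p1 pstar R B (2 # \<tau>))))"
proof -
  have V: "finite {1..n}" "{1..n} - {1} = {2..n}" "{1..n} - {1, 2} = {3..n}"
    by auto
  have ps: "\<forall>j\<in>{1..n} - {1}. 0 \<le> pstar j \<and> pstar j \<le> 1"
    unfolding V(2) using hpstar by auto
  show ?thesis
  proof (intro conjI allI impI)
    fix E \<sigma>
    assume "E = complete_graph \<or> E = star_graph 1" "distinct \<sigma>" "set \<sigma> = {2..n}"
      "sorted_wrt (\<lambda>i j. pstar i \<ge> pstar j) \<sigma>"
    then show "optimal_attack E {1..n} 1 p1 pstar L R B (greedy_profile 1 p1 pstar R B \<sigma>)"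
      using V ps hp1 hL hR hB by (intro optimal_attack_greedy_complete_or_star_center) auto
  next
    fix \<tau>
    assume "n \<ge> 2" "distinct \<tau>" "set \<tau> = {3..n}" "sorted_wrt (\<lambda>i j. pstar i \<ge> pstar j) \<tau>"
    then show "optimal_attack (star_graph 2) {1..n} 1 p1 pstar L R B
        (greedy_profile 1 p1 pstar R B (2 # \<tau>))"
      using V ps hp1 hL hR hB by (intro optimal_attack_greedy_star_leaf) auto
  qed
qed

end
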